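(* Let $\mathcal E$ be a finite set, $\mathcal D=2^{S}$ for a finite set $S$, and let $f_1,f_2:\mathcal E^*\to\mathcal D$ be linear mappings. Then the mappings $f_1\cap f_2$, $f_1=_?f_2$ and $f_1\subseteq_?f_2$ are linear.
   Context: $\mathcal E^*=\bigcup_{n\ge1}\mathcal E^n$ is the set of profiles; $\mathrm{Hist}(P)\in\mathbb Z_{\ge0}^{\mathcal E}$ counts occurrences of each element of $\mathcal E$ in $P$. A mapping $f:\mathcal E^*\to\mathcal D$ is linear if there exist $\vec h_1,\dots,\vec h_K\in\mathbb R^{|\mathcal E|}$ and $g:\{+,-,0\}^K\to\mathcal D$ such that $f(P)=g(\sigma_1,\dots,\sigma_K)$ where $\sigma_t$ is the sign ($+,-,0$) of $\mathrm{Hist}(P)\cdot\vec h_t$. Operations: $(f_1\cap f_2)(P)=f_1(P)\cap f_2(P)$; $(f_1=_?f_2)(P)=f_1(P)$ if $f_1(P)=f_2(P)$ and $\emptyset$ otherwise; $(f_1\subseteq_?f_2)(P)=f_1(P)$ if $f_1(P)\subseteq f_2(P)$ and $\emptyset$ otherwise. *)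

theory Defs
  imports Main "HOL.Real"
begin

definition profiles :: "'e list set" where
  "profiles = {P. P \<noteq> []}"

definition Hist :: "'e list \<Rightarrow> 'e \<Rightarrow> nat" where
  "Hist P e = count_list P e"

datatype sgn = Pos | Neg | Zero

definition sign_of :: "real \<Rightarrow> sgn" where
  "sign_of x = (if x > 0 then Pos else if x < 0 then Neg else Zero)"

definition hist_dot :: "'e::finite list \<Rightarrow> ('e \<Rightarrow> real) \<Rightarrow> real" where
  "hist_dot P h = (\<Sum>e\<in>UNIV. real (Hist P e) * h e)"

definition linear_map :: "('e::finite list \<Rightarrow> 'd) \<Rightarrow> bool" where
  "linear_map f \<longleftrightarrow> (\<exists>(K::nat) (h::nat \<Rightarrow> 'e \<Rightarrow> real) (g::sgn list \<Rightarrow> 'd).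
      \<forall>P\<in>profiles. f P = g (map (\<lambda>t. sign_of (hist_dot P (h t))) [0..<K]))"

definition map_inter :: "('e list \<Rightarrow> 's set) \<Rightarrow> ('e list \<Rightarrow> 's set) \<Rightarrow> 'e list \<Rightarrow> 's set" where
  "map_inter f1 f2 P = f1 P \<inter> f2 P"

definition map_eq_test :: "('e list \<Rightarrow> 's set) \<Rightarrow> ('e list \<Rightarrow> 's set) \<Rightarrow> 'e list \<Rightarrow> 's set" where
  "map_eq_test f1 f2 P = (if f1 P = f2 P then f1 P else {})"

definition map_subset_test :: "('e list \<Rightarrow> 's set) \<Rightarrow> ('e list \<Rightarrow> 's set) \<Rightarrow> 'e list \<Rightarrow> 's set" where
  "map_subset_test f1 f2 P = (if f1 P \<subseteq> f2 P then f1 P else {})"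

end

theory Submission
  imports Defs
begin

text \<open>Concatenating the hyperplane families of f1 and f2 gives a family whose sign vector
  determines both f1 P and f2 P, hence every function of the pair (f1 P, f2 P); intersection
  and the two tests are such functions.\<close>

lemma map_upt_add_split:
  "map (\<lambda>t. if t < m then a t else b (t - m)) [0..<m + n] = map a [0..<m] @ map b [0..<n]"
proof -
  have "[0..<m + n] = [0..<m] @ map (\<lambda>t. t + m) [0..<n]"
    using upt_add_eq_append[of 0 m n] by (simp add: map_add_upt add.commute)
  then show ?thesis
    by simp
qed

lemma linear_map_combine:
  fixes f1 :: "'e::finite list \<Rightarrow> 'a" and f2 :: "'e list \<Rightarrow> 'b"
  assumes "linear_map f1" and "linear_map f2"
  shows "linear_map (\<lambda>P. F (f1 P) (f2 P))"
proof -
  obtain K1 h1 g1 where f1: "\<forall>P\<in>profiles. f1 P = g1 (map (\<lambda>t. sign_of (hist_dot P (h1 t))) [0..<K1])"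
    using assms(1) unfolding linear_map_def by blast
  obtain K2 h2 g2 where f2: "\<forall>P\<in>profiles. f2 P = g2 (map (\<lambda>t. sign_of (hist_dot P (h2 t))) [0..<K2])"
    using assms(2) unfolding linear_map_def by blast
  define h where "h t = (if t < K1 then h1 t else h2 (t - K1))" for t
  define g where "g s = F (g1 (take K1 s)) (g2 (drop K1 s))" for s
  have "\<forall>P\<in>profiles. F (f1 P) (f2 P) = g (map (\<lambda>t. sign_of (hist_dot P (h t))) [0..<K1 + K2])"
    (is "\<forall>P\<in>profiles. ?represented P")
  proof
    fix P :: "'e list"
    assume P: "P \<in> profiles"
    have "map (\<lambda>t. sign_of (hist_dot P (h t))) [0..<K1 + K2]
        = map (\<lambda>t. sign_of (hist_dot P (h1 t))) [0..<K1] @ map (\<lambda>t. sign_of (hist_dot P (h2 t))) [0..<K2]"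
      using map_upt_add_split[of K1 "\<lambda>t. sign_of (hist_dot P (h1 t))" "\<lambda>t. sign_of (hist_dot P (h2 t))" K2]
      by (simp add: h_def if_distrib)
    then show "?represented P"
      using f1 f2 P by (simp add: g_def)
  qed
  then show ?thesis
    unfolding linear_map_def by (intro exI[of _ "K1 + K2"] exI[of _ h] exI[of _ g])
qed

theorem theorem5:
  fixes f1 f2 :: "'e::finite list \<Rightarrow> 's::finite set"
  assumes "linear_map f1" and "linear_map f2"
  shows "linear_map (map_inter f1 f2) \<and> linear_map (map_eq_test f1 f2)
       \<and> linear_map (map_subset_test f1 f2)"
proof (intro conjI)
  show "linear_map (map_inter f1 f2)"
    unfolding map_inter_def[abs_def]
    by (rule linear_map_combine[OF assms, of "\<lambda>A B. A \<inter> B"])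
  show "linear_map (map_eq_test f1 f2)"
    unfolding map_eq_test_def[abs_def]
    by (rule linear_map_combine[OF assms, of "\<lambda>A B. if A = B then A else {}"])
  show "linear_map (map_subset_test f1 f2)"
    unfolding map_subset_test_def[abs_def]
    by (rule linear_map_combine[OF assms, of "\<lambda>A B. if A \<subseteq> B then A else {}"])
qed

end
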